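(* Let $\mathcal{A}=(Q,\delta,s)$ be a quasi-Wheeler NFA (satisfying the standing assumptions below), let $\mathcal{P}'$ be its coarsest forward-stable partition and $\mathcal{A}'=\mathcal{A}/_{\mathcal{P}'}$ the quotient automaton. Run the Ordered Partition Refinement algorithm described below on $\mathcal{A}$. Then at any step of the algorithm, the current ordered partition $\mathcal{P}=\langle Q_1,\dots,Q_k\rangle$ agrees with every Wheeler order $\prec$ of $\mathcal{A}'$: if $i<j$, $u\in Q_i$ and $v\in Q_j$, then $[u]_{\mathcal{P}'}\prec[v]_{\mathcal{P}'}$ for every Wheeler order $\prec$ of $\mathcal{A}'$.
   Context: $\Sigma=\{a_1<\dots<a_k\}$ is a finite totally ordered alphabet. NFA $\mathcal{A}=(Q,\delta,s)$, $\delta:Q\times\Sigma\to2^Q$, $\delta_a(u)=\delta(u,a)$, $\delta_a(T)=\bigcup_{u\in T}\delta_a(u)$. Standing assumptions: $s$ has no incoming transitions, every state is reachable from $s$, every $v\neq s$ has incoming transitions labeled by exactly one letter $\lambda(v)$, and every letter labels some transition. A partition of $Q$ is forward-stable if for any parts $S,T$ and every $a$, $S\subseteq\delta_a(T)$ or $S\cap\delta_a(T)=\emptyset$; the coarsest one is the forward-stable partition with fewest parts. For a partition $\mathcal{P}'$, $[u]_{\mathcal{P}'}$ is the part containing $u$, and the quotient NFA $\mathcal{A}/_{\mathcal{P}'}$ has the parts as states, source $[s]$, and $[v]\in\delta'_a([u])$ iff some $v'\in[v]$ lies in $\delta_a(u')$ for some $u'\in[u]$. A Wheeler order of an NFA $(Q,\delta,s)$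 is a strict total order $\prec$ on $Q$ with $s\prec v$ for $v\neq s$ such that for all $v\in\delta_a(u)$, $v'\in\delta_{a'}(u')$: if $a<a'$ then $v\prec v'$; if $a=a'$, $u\prec u'$, $v\neq v'$ then $v\prec v'$. A total preorder $\preceq$ on $Q$ is a Wheeler preorder if its equivalence classes form the coarsest forward-stable partition and the induced strict order on classes is a Wheeler order of the quotient; $\mathcal{A}$ is quasi-Wheeler if it has a Wheeler preorder. Algorithm (Ordered Partition Refinement): let $Q_\epsilon=\{s\}$, $Q_a=\{v:\lambda(v)=a\}$. Initialize $\mathcal{P}:=\langle Q_\epsilon,Q_{a_1},\dots,Q_{a_k}\rangle$, $\mathcal{X}:=\langle Q\rangle$. While $\mathcal{X}\neq\mathcal{P}$: let $S$ be the first part of $\mathcal{X}$ that is a union of at least two parts of $\mathcal{P}$; let $B$ be the smaller (in cardinality) of the first and last part of $\mathcal{P}$ contained in $S$; replace $S$ in $\mathcal{X}$ by $B,S\setminus B$ if $B$ was the first such part, else by $S\setminus B,B$. For each part $D$ of $\mathcal{P}$ present before this step, with $a=\lambda(D)$ (for $\{s\}$ take $D_1=\emptyset$): $D_1:=D\cap\delta_a(B)$, $D_2:=D\setminus D_1$, $D_{11}:=D_1\cap\delta_a(S\setminus B)$, $D_{12}:=D_1\setminus D_{11}$; replace $D$ by the nonempty sets among $D_{12},D_{11},D_2$ (in this order) if $B$ was first, else among $D_2,D_{11},D_{12}$ (in this order). Return $\mathcal{P}$. *)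

theory Defs
  imports Main
begin

text \<open>An NFA is given by a state set Q, a finite totally ordered alphabet Al,
  a transition function delta (only meaningful on Q and Al) and a source s.\<close>

definition dimg :: "('q \<Rightarrow> 'a \<Rightarrow> 'q set) \<Rightarrow> 'a \<Rightarrow> 'q set \<Rightarrow> 'q set" where
  "dimg \<delta> a T = (\<Union>u\<in>T. \<delta> u a)"

definition nfa_std :: "'q set \<Rightarrow> 'a::linorder set \<Rightarrow> ('q \<Rightarrow> 'a \<Rightarrow> 'q set) \<Rightarrow> 'q \<Rightarrow> bool" where
  "nfa_std Q Al \<delta> s \<longleftrightarrow>
     finite Q \<and> finite Al \<and> s \<in> Q \<and>
     (\<forall>u\<in>Q. \<forall>a\<in>Al. \<delta> u a \<subseteq> Q) \<and>
     (\<forall>u\<in>Q. \<forall>a\<in>Al. s \<notin> \<delta> u a) \<and>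
     (\<forall>v\<in>Q. (s, v) \<in> {(u, w). u \<in> Q \<and> (\<exists>a\<in>Al. w \<in> \<delta> u a)}\<^sup>*) \<and>
     (\<forall>v\<in>Q. v \<noteq> s \<longrightarrow> (\<exists>!a. a \<in> Al \<and> (\<exists>u\<in>Q. v \<in> \<delta> u a))) \<and>
     (\<forall>a\<in>Al. \<exists>u\<in>Q. \<delta> u a \<noteq> {})"

definition lab :: "'q set \<Rightarrow> 'a set \<Rightarrow> ('q \<Rightarrow> 'a \<Rightarrow> 'q set) \<Rightarrow> 'q \<Rightarrow> 'a" where
  "lab Q Al \<delta> v = (SOME a. a \<in> Al \<and> (\<exists>u\<in>Q. v \<in> \<delta> u a))"

definition is_partition :: "'q set \<Rightarrow> 'q set set \<Rightarrow> bool" where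
  "is_partition Q P \<longleftrightarrow> (\<forall>Y\<in>P. Y \<noteq> {} \<and> Y \<subseteq> Q) \<and> \<Union>P = Q \<and>
     (\<forall>Y\<in>P. \<forall>Z\<in>P. Y \<noteq> Z \<longrightarrow> Y \<inter> Z = {})"

definition forward_stable :: "'q set \<Rightarrow> 'a set \<Rightarrow> ('q \<Rightarrow> 'a \<Rightarrow> 'q set) \<Rightarrow> 'q set set \<Rightarrow> bool" where
  "forward_stable Q Al \<delta> P \<longleftrightarrow> is_partition Q P \<and>
     (\<forall>S\<in>P. \<forall>T\<in>P. \<forall>a\<in>Al. S \<subseteq> dimg \<delta> a T \<or> S \<inter> dimg \<delta> a T = {})"

definition coarsest_fs :: "'q set \<Rightarrow> 'a set \<Rightarrow> ('q \<Rightarrow> 'a \<Rightarrow> 'q set) \<Rightarrow> 'q set set \<Rightarrow> bool" where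
  "coarsest_fs Q Al \<delta> P \<longleftrightarrow> forward_stable Q Al \<delta> P \<and>
     (\<forall>P2. forward_stable Q Al \<delta> P2 \<longrightarrow> card P \<le> card P2)"

definition part_of :: "'q set set \<Rightarrow> 'q \<Rightarrow> 'q set" where
  "part_of P u = (THE Y. Y \<in> P \<and> u \<in> Y)"

definition quot_delta :: "('q \<Rightarrow> 'a \<Rightarrow> 'q set) \<Rightarrow> 'q set set \<Rightarrow> 'q set \<Rightarrow> 'a \<Rightarrow> 'q set set" where
  "quot_delta \<delta> P X a = {Y \<in> P. \<exists>v\<in>Y. \<exists>u\<in>X. v \<in> \<delta> u a}"

definition wheeler_order :: "'q set \<Rightarrow> 'a::linorder set \<Rightarrow> ('q \<Rightarrow> 'a \<Rightarrow> 'q set) \<Rightarrow> 'q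
    \<Rightarrow> ('q \<Rightarrow> 'q \<Rightarrow> bool) \<Rightarrow> bool" where
  "wheeler_order Q Al \<delta> s lt \<longleftrightarrow>
     (\<forall>x\<in>Q. \<not> lt x x) \<and>
     (\<forall>x\<in>Q. \<forall>y\<in>Q. \<forall>z\<in>Q. lt x y \<and> lt y z \<longrightarrow> lt x z) \<and>
     (\<forall>x\<in>Q. \<forall>y\<in>Q. x \<noteq> y \<longrightarrow> lt x y \<or> lt y x) \<and>
     (\<forall>v\<in>Q. v \<noteq> s \<longrightarrow> lt s v) \<and>
     (\<forall>u\<in>Q. \<forall>u'\<in>Q. \<forall>a\<in>Al. \<forall>a'\<in>Al. \<forall>v\<in>\<delta> u a. \<forall>v'\<in>\<delta> u' a'.
        (a < a' \<longrightarrow> lt v v') \<and> (a = a' \<and> lt u u' \<and> v \<noteq> v' \<longrightarrow> lt v v'))"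

definition wheeler_preorder :: "'q set \<Rightarrow> 'a::linorder set \<Rightarrow> ('q \<Rightarrow> 'a \<Rightarrow> 'q set) \<Rightarrow> 'q
    \<Rightarrow> ('q \<Rightarrow> 'q \<Rightarrow> bool) \<Rightarrow> bool" where
  "wheeler_preorder Q Al \<delta> s le \<longleftrightarrow>
     (\<forall>x\<in>Q. le x x) \<and>
     (\<forall>x\<in>Q. \<forall>y\<in>Q. \<forall>z\<in>Q. le x y \<and> le y z \<longrightarrow> le x z) \<and>
     (\<forall>x\<in>Q. \<forall>y\<in>Q. le x y \<or> le y x) \<and>
     (let C = (\<lambda>u. {v\<in>Q. le u v \<and> le v u}) ` Q in
        coarsest_fs Q Al \<delta> C \<and>
        wheeler_order C Al (quot_delta \<delta> C) (part_of C s)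
          (\<lambda>X Y. \<exists>u\<in>X. \<exists>v\<in>Y. le u v \<and> \<not> le v u))"

definition quasi_wheeler :: "'q set \<Rightarrow> 'a::linorder set \<Rightarrow> ('q \<Rightarrow> 'a \<Rightarrow> 'q set) \<Rightarrow> 'q \<Rightarrow> bool" where
  "quasi_wheeler Q Al \<delta> s \<longleftrightarrow> (\<exists>le. wheeler_preorder Q Al \<delta> s le)"

definition opr_init :: "'q set \<Rightarrow> 'a::linorder set \<Rightarrow> ('q \<Rightarrow> 'a \<Rightarrow> 'q set) \<Rightarrow> 'q
    \<Rightarrow> 'q set list \<times> 'q set list" where
  "opr_init Q Al \<delta> s =
     ([{s}] @ map (\<lambda>a. {v\<in>Q. v \<noteq> s \<and> lab Q Al \<delta> v = a}) (sorted_list_of_set Al), [Q])"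

text \<open>Splitting a part D of P with respect to the splitter B \<subseteq> S; fstB says
  whether B was the first part of P contained in S.\<close>
definition split_part :: "'q set \<Rightarrow> 'a set \<Rightarrow> ('q \<Rightarrow> 'a \<Rightarrow> 'q set) \<Rightarrow> 'q
    \<Rightarrow> 'q set \<Rightarrow> 'q set \<Rightarrow> bool \<Rightarrow> 'q set \<Rightarrow> 'q set list" where
  "split_part Q Al \<delta> s B S fstB D =
     (let a = lab Q Al \<delta> (SOME x. x \<in> D);
          D1 = (if D = {s} then {} else D \<inter> dimg \<delta> a B);
          D2 = D - D1;
          D11 = D1 \<inter> dimg \<delta> a (S - B);
          D12 = D1 - D11
      in filter (\<lambda>Y. Y \<noteq> {}) (if fstB then [D12, D11, D2] else [D2, D11, D12]))"

definition is_candidate :: "'q set list \<Rightarrow> 'q set \<Rightarrow> bool" where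
  "is_candidate P S \<longleftrightarrow> S = \<Union>{D \<in> set P. D \<subseteq> S} \<and> 2 \<le> card {D \<in> set P. D \<subseteq> S}"

text \<open>One iteration of the while loop. When the first and last parts of P inside S
  have equal cardinality, either may be chosen as B (both tie-breaks are allowed).\<close>
definition opr_step :: "'q set \<Rightarrow> 'a set \<Rightarrow> ('q \<Rightarrow> 'a \<Rightarrow> 'q set) \<Rightarrow> 'q
    \<Rightarrow> 'q set list \<times> 'q set list \<Rightarrow> 'q set list \<times> 'q set list \<Rightarrow> bool" where
  "opr_step Q Al \<delta> s st st' \<longleftrightarrow>
     (let P = fst st; X = snd st in
      X \<noteq> P \<and>
      (\<exists>i fstB. i < length X \<and> is_candidate P (X ! i) \<and> (\<forall>j<i. \<not> is_candidate P (X ! j)) \<and>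
        (let S = X ! i;
             Ds = filter (\<lambda>D. D \<subseteq> S) P;
             B = (if fstB then hd Ds else last Ds)
         in (if fstB then card (hd Ds) \<le> card (last Ds) else card (last Ds) \<le> card (hd Ds)) \<and>
            snd st' = take i X @ (if fstB then [B, S - B] else [S - B, B]) @ drop (Suc i) X \<and>
            fst st' = concat (map (split_part Q Al \<delta> s B S fstB) P))))"

end

(* The algorithm maintains the following invariant on the ordered partition P: every part is a
   union of classes of P', is either {s} or has all incoming transitions labelled by one letter,
   is stable with respect to every part of X, and whenever a part precedes another in P, the
   classes of its states precede those of the other in the Wheeler order. Initially the last
   condition is the Wheeler axiom for distinct letters together with s coming first. In a step
   the splitter B is the first (last) part of P inside S, hence lies entirely before (after)
   S - B. A part D with letter a is cut into the states with a-predecessors only in B, in both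
   B and S - B, and only in S - B; stability of D with respect to S ensures that, once one state
   of D has a predecessor in B, every state of D has one in S. The Wheeler axiom for equal
   letters then orders the pieces exactly as the algorithm lists them. *)

theory Submission
  imports Defs
begin

lemma sorted_wrt_concat_map:
  assumes "sorted_wrt R xs"
    and "\<And>x. x \<in> set xs \<Longrightarrow> sorted_wrt R' (f x)"
    and "\<And>x y a b. x \<in> set xs \<Longrightarrow> y \<in> set xs \<Longrightarrow> R x y \<Longrightarrow> a \<in> set (f x) \<Longrightarrow> b \<in> set (f y) \<Longrightarrow> R' a b"
  shows "sorted_wrt R' (concat (map f xs))"
  using assms
proof (induction xs)
  case (Cons x xs)
  have "sorted_wrt R' (concat (map f xs))"
    using Cons.prems by (intro Cons.IH) (auto, blast)
  moreover have "R' a b" if "a \<in> set (f x)" "y \<in> set xs" "b \<in> set (f y)" for a b y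
    using Cons.prems(3)[of x y a b] Cons.prems(1) that by simp
  ultimately show ?case
    using Cons.prems(2) by (auto simp add: sorted_wrt_append)
qed simp

locale std_nfa =
  fixes Q :: "'q set" and Al :: "'a::linorder set" and \<delta> :: "'q \<Rightarrow> 'a \<Rightarrow> 'q set" and s :: 'q
  assumes nfa_std: "nfa_std Q Al \<delta> s"
begin

abbreviation label :: "'q \<Rightarrow> 'a" where
  "label \<equiv> lab Q Al \<delta>"

abbreviation block_label :: "'q set \<Rightarrow> 'a" where
  "block_label D \<equiv> label (SOME x. x \<in> D)"

lemma source_in: "s \<in> Q"
  using nfa_std unfolding nfa_std_def by blast

lemma delta_closed: "u \<in> Q \<Longrightarrow> a \<in> Al \<Longrightarrow> \<delta> u a \<subseteq> Q"
  using nfa_std unfolding nfa_std_def by blast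

lemma source_no_incoming: "u \<in> Q \<Longrightarrow> a \<in> Al \<Longrightarrow> s \<notin> \<delta> u a"
  using nfa_std unfolding nfa_std_def by blast

lemma label_incoming:
  assumes "v \<in> Q" "v \<noteq> s"
  shows "label v \<in> Al \<and> (\<exists>u\<in>Q. v \<in> \<delta> u (label v))"
proof -
  have "\<exists>!a. a \<in> Al \<and> (\<exists>u\<in>Q. v \<in> \<delta> u a)"
    using nfa_std assms unfolding nfa_std_def by blast
  then show ?thesis
    unfolding lab_def by (rule someI_ex[OF ex1_implies_ex])
qed

lemma label_eq:
  assumes "u \<in> Q" "a \<in> Al" "v \<in> \<delta> u a"
  shows "label v = a"
proof -
  have "v \<in> Q" "v \<noteq> s"
    using assms delta_closed source_no_incoming by blast+
  moreover have "\<exists>!a. a \<in> Al \<and> (\<exists>u\<in>Q. v \<in> \<delta> u a)"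
    using nfa_std calculation unfolding nfa_std_def by blast
  ultimately show ?thesis
    using label_incoming assms by blast
qed

lemma dimg_subset: "Y \<subseteq> Q \<Longrightarrow> a \<in> Al \<Longrightarrow> dimg \<delta> a Y \<subseteq> Q"
  using delta_closed unfolding dimg_def by blast

lemma dimg_split: "B \<subseteq> S \<Longrightarrow> dimg \<delta> a S = dimg \<delta> a B \<union> dimg \<delta> a (S - B)"
  unfolding dimg_def by blast

lemma dimg_Q:
  assumes "a \<in> Al"
  shows "dimg \<delta> a Q = {v \<in> Q. v \<noteq> s \<and> label v = a}"
proof
  show "dimg \<delta> a Q \<subseteq> {v \<in> Q. v \<noteq> s \<and> label v = a}"
    using assms delta_closed source_no_incoming label_eq unfolding dimg_def by blast
  show "{v \<in> Q. v \<noteq> s \<and> label v = a} \<subseteq> dimg \<delta> a Q"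
    using label_incoming unfolding dimg_def by blast
qed

lemma dimg_Q_nonempty: "a \<in> Al \<Longrightarrow> dimg \<delta> a Q \<noteq> {}"
  using nfa_std unfolding nfa_std_def dimg_def by blast

definition stable_wrt :: "'q set \<Rightarrow> 'q set \<Rightarrow> bool" where
  "stable_wrt D T \<longleftrightarrow>
     D \<subseteq> dimg \<delta> (block_label D) T \<or> D \<inter> dimg \<delta> (block_label D) T = {}"

end

locale forward_stable_partition = std_nfa +
  fixes P'
  assumes forward_stable: "forward_stable Q Al \<delta> P'"
begin

abbreviation cls where
  "cls \<equiv> part_of P'"

lemma partition_P': "is_partition Q P'"
  using forward_stable unfolding forward_stable_def by blast

lemma forward_stableD:
  "C \<in> P' \<Longrightarrow> T \<in> P' \<Longrightarrow> a \<in> Al \<Longrightarrow> C \<subseteq> dimg \<delta> a T \<or> C \<inter> dimg \<delta> a T = {}"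
  using forward_stable unfolding forward_stable_def by blast

lemma class_subset: "C \<in> P' \<Longrightarrow> C \<subseteq> Q"
  using partition_P' unfolding is_partition_def by blast

lemma part_of_in:
  assumes "u \<in> Q"
  shows "cls u \<in> P'" "u \<in> cls u"
proof -
  have "\<exists>!C. C \<in> P' \<and> u \<in> C"
    using partition_P' assms unfolding is_partition_def by blast
  then have "cls u \<in> P' \<and> u \<in> cls u"
    unfolding part_of_def by (rule theI')
  then show "cls u \<in> P'" "u \<in> cls u" by blast+
qed

lemma part_of_eq:
  assumes "C \<in> P'" "u \<in> C"
  shows "cls u = C"
proof -
  have "u \<in> Q"
    using assms class_subset by blast
  then have "cls u \<in> P'" "u \<in> cls u"
    by (rule part_of_in)+
  then show ?thesis
    using partition_P' assms unfolding is_partition_def by blast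
qed

definition saturated where
  "saturated T \<longleftrightarrow> (\<forall>C\<in>P'. C \<inter> T \<noteq> {} \<longrightarrow> C \<subseteq> T)"

lemma saturated_Int: "saturated Y \<Longrightarrow> saturated Z \<Longrightarrow> saturated (Y \<inter> Z)"
  unfolding saturated_def by blast

lemma saturated_Diff: "saturated Y \<Longrightarrow> saturated Z \<Longrightarrow> saturated (Y - Z)"
  unfolding saturated_def by blast

lemma saturated_Union: "(\<And>Y. Y \<in> \<Y> \<Longrightarrow> saturated Y) \<Longrightarrow> saturated (\<Union>\<Y>)"
  unfolding saturated_def by blast

lemma saturated_Q: "saturated Q"
  using class_subset unfolding saturated_def by blast

lemma part_of_subset:
  assumes "saturated T" "u \<in> T" "u \<in> Q"
  shows "cls u \<subseteq> T"
  using assms part_of_in[OF assms(3)] unfolding saturated_def by blast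

lemma part_of_neq:
  assumes "saturated T" "u \<in> T" "u \<in> Q" "w \<in> Q" "w \<notin> T"
  shows "cls u \<noteq> cls w"
  using part_of_subset[OF assms(1-3)] part_of_in(2)[OF assms(4)] assms(5) by blast

lemma saturated_dimg:
  assumes "saturated Y" "Y \<subseteq> Q" "a \<in> Al"
  shows "saturated (dimg \<delta> a Y)"
  unfolding saturated_def
proof (intro ballI impI subsetI)
  fix C w assume C: "C \<in> P'" "C \<inter> dimg \<delta> a Y \<noteq> {}" and w: "w \<in> C"
  then obtain x p where x: "x \<in> C" and p: "p \<in> Y" "x \<in> \<delta> p a"
    unfolding dimg_def by blast
  have "p \<in> Q"
    using p assms(2) by blast
  then have p_cls: "cls p \<in> P'" "p \<in> cls p" "cls p \<subseteq> Y"
    using part_of_in part_of_subset[OF assms(1) p(1)] by blast+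
  have "C \<inter> dimg \<delta> a (cls p) \<noteq> {}"
    using x p p_cls unfolding dimg_def by blast
  then have "C \<subseteq> dimg \<delta> a (cls p)"
    using forward_stableD[OF C(1) p_cls(1) assms(3)] by blast
  then show "w \<in> dimg \<delta> a Y"
    using w p_cls(3) unfolding dimg_def by blast
qed

lemma class_label:
  assumes "C \<in> P'" "x \<in> C" "w \<in> C" "x \<noteq> s"
  shows "w \<noteq> s \<and> label w = label x"
proof -
  have x: "x \<in> Q" using assms class_subset by blast
  have a: "label x \<in> Al" and "x \<in> dimg \<delta> (label x) Q"
    using label_incoming[OF x assms(4)] unfolding dimg_def by blast+
  moreover have "saturated (dimg \<delta> (label x) Q)"
    using saturated_dimg[OF saturated_Q subset_refl a] .
  ultimately have "w \<in> dimg \<delta> (label x) Q"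
    using assms(1-3) unfolding saturated_def by blast
  then show ?thesis
    using dimg_Q[OF a] by blast
qed

lemma part_of_source: "cls s = {s}"
proof -
  have "w = s" if "w \<in> cls s" for w
    using class_label[OF part_of_in(1)[OF source_in] that part_of_in(2)[OF source_in]] by blast
  then show ?thesis
    using part_of_in(2)[OF source_in] by blast
qed

lemma saturated_source: "saturated {s}"
  unfolding saturated_def
proof (intro ballI impI)
  fix C assume "C \<in> P'" "C \<inter> {s} \<noteq> {}"
  then have "cls s = C"
    using part_of_eq by blast
  then show "C \<subseteq> {s}"
    using part_of_source by simp
qed

definition block where
  "block D \<longleftrightarrow> D \<noteq> {} \<and> D \<subseteq> Q \<and> saturated D \<and>
     (D = {s} \<or> s \<notin> D \<and> (\<forall>x\<in>D. label x = block_label D))"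

lemma block_label_subset:
  assumes "block D" "D' \<subseteq> D" "D' \<noteq> {}"
  shows "block_label D' = block_label D"
proof (cases "D = {s}")
  case True
  then show ?thesis using assms(2,3) by (metis subset_singleton_iff)
next
  case False
  have "(SOME x. x \<in> D') \<in> D'"
    using assms(3) by (simp add: some_in_eq)
  then show ?thesis
    using assms False unfolding block_def by blast
qed

lemma block_label_in:
  assumes "block D" "D \<noteq> {s}"
  shows "block_label D \<in> Al"
proof -
  have "(SOME x. x \<in> D) \<in> D"
    using assms(1) unfolding block_def by (simp add: some_in_eq)
  then show ?thesis
    using assms label_incoming unfolding block_def by blast
qed

lemma stable_wrt_subset:
  assumes "block D" "D' \<subseteq> D" "D' \<noteq> {}" "stable_wrt D T"
  shows "stable_wrt D' T"
proof -
  have label: "block_label D' = block_label D"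
    by (rule block_label_subset[OF assms(1-3)])
  show ?thesis
    using assms(2,4) unfolding stable_wrt_def label by blast
qed

lemma block_source: "block {s}"
  unfolding block_def using source_in saturated_source by blast

lemma block_dimg_Q:
  assumes "a \<in> Al"
  shows "block (dimg \<delta> a Q)" "block_label (dimg \<delta> a Q) = a"
proof -
  have "(SOME x. x \<in> dimg \<delta> a Q) \<in> dimg \<delta> a Q"
    using dimg_Q_nonempty[OF assms] by (simp add: some_in_eq)
  then show label: "block_label (dimg \<delta> a Q) = a"
    using dimg_Q[OF assms] by blast
  have "saturated (dimg \<delta> a Q)"
    using saturated_dimg[OF saturated_Q _ assms] by blast
  then show "block (dimg \<delta> a Q)"
    unfolding block_def label using dimg_Q_nonempty[OF assms] dimg_Q[OF assms] by blast
qed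

lemma split_part_source: "split_part Q Al \<delta> s B S fstB {s} = [{s}]"
  unfolding split_part_def Let_def by simp

lemma split_part_eq:
  assumes "D \<noteq> {s}"
  defines "a \<equiv> block_label D"
  shows "split_part Q Al \<delta> s B S fstB D = filter (\<lambda>Y. Y \<noteq> {})
    (if fstB
     then [D \<inter> dimg \<delta> a B - dimg \<delta> a (S - B), D \<inter> dimg \<delta> a B \<inter> dimg \<delta> a (S - B), D - dimg \<delta> a B]
     else [D - dimg \<delta> a B, D \<inter> dimg \<delta> a B \<inter> dimg \<delta> a (S - B), D \<inter> dimg \<delta> a B - dimg \<delta> a (S - B)])"
  using assms unfolding split_part_def Let_def by (simp add: Diff_Int)

lemma split_part_blocks:
  assumes D: "block D" and stable_S: "D \<noteq> {s} \<Longrightarrow> stable_wrt D S"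
    and "B \<subseteq> S" "S \<subseteq> Q" "saturated B" "saturated (S - B)"
    and D': "D' \<in> set (split_part Q Al \<delta> s B S fstB D)"
  shows "block D' \<and> D' \<subseteq> D \<and> (D' \<noteq> {s} \<longrightarrow> stable_wrt D' B \<and> stable_wrt D' (S - B))"
proof (cases "D = {s}")
  case True
  then show ?thesis
    using D D' split_part_source by simp
next
  case False
  define a where "a = block_label D"
  have a: "a \<in> Al"
    using block_label_in D False a_def by blast
  have D_props: "D \<subseteq> Q" "saturated D" "s \<notin> D" "\<forall>x\<in>D. label x = a"
    using D False unfolding block_def a_def by blast+
  have pieces: "D' \<noteq> {}"
    "D' \<in> {D \<inter> dimg \<delta> a B - dimg \<delta> a (S - B), D \<inter> dimg \<delta> a B \<inter> dimg \<delta> a (S - B), D - dimg \<delta> a B}"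
    using D' unfolding split_part_eq[OF False] a_def by (auto split: if_splits)
  then have "D' \<subseteq> D"
    by blast
  then have label_D': "block_label D' = a"
    using block_label_subset[OF D _ pieces(1)] a_def by blast
  have "B \<subseteq> Q" "S - B \<subseteq> Q"
    using assms(3,4) by blast+
  then have "saturated (dimg \<delta> a B)" "saturated (dimg \<delta> a (S - B))"
    using saturated_dimg assms(5,6) a by blast+
  then have "saturated (D \<inter> dimg \<delta> a B - dimg \<delta> a (S - B))" "saturated (D \<inter> dimg \<delta> a B \<inter> dimg \<delta> a (S - B))"
    "saturated (D - dimg \<delta> a B)"
    using D_props(2) by (simp_all add: saturated_Int saturated_Diff)
  then have "saturated D'"
    using pieces(2) by blast
  then have "block D'"
    unfolding block_def label_D' using pieces \<open>D' \<subseteq> D\<close> D_props by blast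
  have "D \<subseteq> dimg \<delta> a S \<or> D \<inter> dimg \<delta> a S = {}"
    using stable_S False unfolding stable_wrt_def a_def by blast
  moreover have "dimg \<delta> a S = dimg \<delta> a B \<union> dimg \<delta> a (S - B)"
    using dimg_split[OF \<open>B \<subseteq> S\<close>] .
  ultimately have "stable_wrt D' B \<and> stable_wrt D' (S - B)"
    unfolding stable_wrt_def label_D' using pieces(2) by blast
  then show ?thesis
    using \<open>block D'\<close> \<open>D' \<subseteq> D\<close> by blast
qed

end

locale wheeler_quotient = forward_stable_partition +
  fixes lt
  assumes wheeler: "wheeler_order P' Al (quot_delta \<delta> P') (part_of P' s) lt"
begin

definition precedes where
  "precedes D E \<longleftrightarrow> (\<forall>u\<in>D. \<forall>v\<in>E. lt (cls u) (cls v))"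

lemma wheeler_source: "X \<in> P' \<Longrightarrow> X \<noteq> cls s \<Longrightarrow> lt (cls s) X"
  using wheeler unfolding wheeler_order_def by blast

lemma wheeler_axiom:
  assumes "X \<in> P'" "X' \<in> P'" "a \<in> Al" "a' \<in> Al"
    and "Y \<in> quot_delta \<delta> P' X a" "Y' \<in> quot_delta \<delta> P' X' a'"
  shows "a < a' \<Longrightarrow> lt Y Y'" and "a = a' \<Longrightarrow> lt X X' \<Longrightarrow> Y \<noteq> Y' \<Longrightarrow> lt Y Y'"
proof -
  have "\<forall>X\<in>P'. \<forall>X'\<in>P'. \<forall>a\<in>Al. \<forall>a'\<in>Al. \<forall>Y\<in>quot_delta \<delta> P' X a. \<forall>Y'\<in>quot_delta \<delta> P' X' a'.
      (a < a' \<longrightarrow> lt Y Y') \<and> (a = a' \<and> lt X X' \<and> Y \<noteq> Y' \<longrightarrow> lt Y Y')"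
    using wheeler unfolding wheeler_order_def by (elim conjE)
  then show "a < a' \<Longrightarrow> lt Y Y'" and "a = a' \<Longrightarrow> lt X X' \<Longrightarrow> Y \<noteq> Y' \<Longrightarrow> lt Y Y'"
    using assms by blast+
qed

lemma part_of_in_quot_delta:
  assumes "p \<in> Q" "a \<in> Al" "u \<in> \<delta> p a"
  shows "cls u \<in> quot_delta \<delta> P' (cls p) a"
proof -
  have u: "u \<in> Q"
    using delta_closed assms by blast
  show ?thesis
    using part_of_in[OF u] part_of_in(2)[OF assms(1)] assms(3) unfolding quot_delta_def by blast
qed

lemma precedes_source:
  assumes "Z \<subseteq> Q" "s \<notin> Z"
  shows "precedes {s} Z"
  unfolding precedes_def
proof (intro ballI)
  fix u v assume "u \<in> {s}" "v \<in> Z"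
  then have "v \<in> Q" "u = s" "v \<noteq> s"
    using assms by blast+
  then have "cls v \<in> P'" "cls v \<noteq> cls s"
    using part_of_in[OF \<open>v \<in> Q\<close>] part_of_source by auto
  then show "lt (cls u) (cls v)"
    using wheeler_source \<open>u = s\<close> by blast
qed

lemma precedes_dimg_less:
  assumes "a < b" "a \<in> Al" "b \<in> Al" "Y \<subseteq> Q" "Z \<subseteq> Q"
  shows "precedes (dimg \<delta> a Y) (dimg \<delta> b Z)"
  unfolding precedes_def
proof (intro ballI)
  fix u w assume "u \<in> dimg \<delta> a Y" "w \<in> dimg \<delta> b Z"
  then obtain p q where "p \<in> Y" "u \<in> \<delta> p a" "q \<in> Z" "w \<in> \<delta> q b"
    unfolding dimg_def by blast
  then have "p \<in> Q" "q \<in> Q"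
    using assms(4,5) by blast+
  show "lt (cls u) (cls w)"
    by (rule wheeler_axiom(1)[OF part_of_in(1)[OF \<open>p \<in> Q\<close>] part_of_in(1)[OF \<open>q \<in> Q\<close>] assms(2,3)
          part_of_in_quot_delta part_of_in_quot_delta assms(1)]) fact+
qed

lemma precedes_dimg:
  assumes "precedes B C" "B \<subseteq> Q" "C \<subseteq> Q" "a \<in> Al"
    and "Y \<subseteq> dimg \<delta> a B" "Z \<subseteq> dimg \<delta> a C" "\<And>u w. u \<in> Y \<Longrightarrow> w \<in> Z \<Longrightarrow> cls u \<noteq> cls w"
  shows "precedes Y Z"
  unfolding precedes_def
proof (intro ballI)
  fix u w assume "u \<in> Y" "w \<in> Z"
  then obtain p q where "p \<in> B" "u \<in> \<delta> p a" "q \<in> C" "w \<in> \<delta> q a"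
    using assms(5,6) unfolding dimg_def by blast
  then have "p \<in> Q" "q \<in> Q" "lt (cls p) (cls q)"
    using assms(1-3) unfolding precedes_def by blast+
  show "lt (cls u) (cls w)"
    by (rule wheeler_axiom(2)[OF part_of_in(1)[OF \<open>p \<in> Q\<close>] part_of_in(1)[OF \<open>q \<in> Q\<close>] assms(4,4)
          part_of_in_quot_delta part_of_in_quot_delta refl \<open>lt (cls p) (cls q)\<close> assms(7)]) fact+
qed

text \<open>Since \<open>\<delta>\<^sub>a(B)\<close> and \<open>\<delta>\<^sub>a(C)\<close> are saturated, states in different pieces lie in different
  classes, which is the side condition \<open>v \<noteq> v'\<close> of the Wheeler axiom.\<close>
lemma sorted_split_pieces:
  assumes "precedes B C" "B \<subseteq> Q" "C \<subseteq> Q" "saturated B" "saturated C" "a \<in> Al"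
    and "Y1 \<subseteq> dimg \<delta> a B - dimg \<delta> a C" "Y2 \<subseteq> dimg \<delta> a B \<inter> dimg \<delta> a C"
    and "Y3 \<subseteq> dimg \<delta> a C - dimg \<delta> a B"
  shows "sorted_wrt precedes [Y1, Y2, Y3]"
proof -
  have sat: "saturated (dimg \<delta> a B)" "saturated (dimg \<delta> a C)"
    using saturated_dimg assms(2-6) by blast+
  have Q: "dimg \<delta> a B \<subseteq> Q" "dimg \<delta> a C \<subseteq> Q"
    using dimg_subset assms(2,3,6) by blast+
  have neq_C: "cls u \<noteq> cls w" if "u \<in> dimg \<delta> a B - dimg \<delta> a C" "w \<in> dimg \<delta> a C" for u w
    using part_of_neq[OF sat(2) that(2) _ _] Q that by blast
  have neq_B: "cls u \<noteq> cls w" if "u \<in> dimg \<delta> a B" "w \<in> dimg \<delta> a C - dimg \<delta> a B" for u w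
    using part_of_neq[OF sat(1) that(1) _ _] Q that by blast
  have "precedes Y1 Y2" "precedes Y1 Y3"
    by (rule precedes_dimg[OF assms(1-3,6)]; use assms(7-9) neq_C in blast)+
  moreover have "precedes Y2 Y3"
    by (rule precedes_dimg[OF assms(1-3,6)]; use assms(8,9) neq_B in blast)
  ultimately show ?thesis
    by simp
qed

lemma split_part_sorted:
  assumes D: "block D" and stable_S: "D \<noteq> {s} \<Longrightarrow> stable_wrt D S"
    and B: "B \<subseteq> S" "S \<subseteq> Q" "saturated B" "saturated (S - B)"
    and order: "if fstB then precedes B (S - B) else precedes (S - B) B"
  shows "sorted_wrt precedes (split_part Q Al \<delta> s B S fstB D)"
proof (cases "D = {s}")
  case True
  then show ?thesis
    using split_part_source by simp
next
  case False
  define a where "a = block_label D"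
  have a: "a \<in> Al"
    using block_label_in D False a_def by blast
  have "sorted_wrt precedes
    (if fstB
     then [D \<inter> dimg \<delta> a B - dimg \<delta> a (S - B), D \<inter> dimg \<delta> a B \<inter> dimg \<delta> a (S - B), D - dimg \<delta> a B]
     else [D - dimg \<delta> a B, D \<inter> dimg \<delta> a B \<inter> dimg \<delta> a (S - B), D \<inter> dimg \<delta> a B - dimg \<delta> a (S - B)])"
  proof (cases "D \<inter> dimg \<delta> a B = {}")
    case True
    then show ?thesis
      by (simp add: precedes_def)
  next
    case False
    then have "D \<subseteq> dimg \<delta> a S"
      using stable_S \<open>D \<noteq> {s}\<close> B(1) unfolding stable_wrt_def a_def dimg_def by blast
    moreover have "dimg \<delta> a S = dimg \<delta> a B \<union> dimg \<delta> a (S - B)"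
      using dimg_split[OF B(1)] .
    ultimately have rest: "D - dimg \<delta> a B \<subseteq> dimg \<delta> a (S - B) - dimg \<delta> a B"
      by blast
    have "B \<subseteq> Q" "S - B \<subseteq> Q"
      using B by blast+
    then show ?thesis
    proof (cases fstB)
      case True
      have "sorted_wrt precedes
        [D \<inter> dimg \<delta> a B - dimg \<delta> a (S - B), D \<inter> dimg \<delta> a B \<inter> dimg \<delta> a (S - B), D - dimg \<delta> a B]"
        by (rule sorted_split_pieces[of B "S - B" a]) (use True order B a rest in auto)
      then show ?thesis
        using True by simp
    next
      case False
      have "sorted_wrt precedes
        [D - dimg \<delta> a B, D \<inter> dimg \<delta> a B \<inter> dimg \<delta> a (S - B), D \<inter> dimg \<delta> a B - dimg \<delta> a (S - B)]"
        by (rule sorted_split_pieces[of "S - B" B a]) (use False order B a rest in auto)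
      then show ?thesis
        using False by simp
    qed
  qed
  then show ?thesis
    unfolding split_part_eq[OF False] a_def by (rule sorted_wrt_filter)
qed

lemma splitter_order:
  assumes "sorted_wrt precedes P" "is_candidate P S"
  defines "Ds \<equiv> filter (\<lambda>D. D \<subseteq> S) P"
  shows "Ds \<noteq> []" "S = \<Union>(set Ds)"
    and "precedes (hd Ds) (S - hd Ds)" "precedes (S - last Ds) (last Ds)"
proof -
  have set_Ds: "set Ds = {D \<in> set P. D \<subseteq> S}"
    unfolding Ds_def by auto
  then show S: "S = \<Union>(set Ds)"
    using assms(2) unfolding is_candidate_def by simp
  show "Ds \<noteq> []"
  proof
    assume "Ds = []"
    then have "{D \<in> set P. D \<subseteq> S} = {}"
      using set_Ds by simp
    then show False
      using assms(2) unfolding is_candidate_def by (metis card.empty not_numeral_le_zero)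
  qed
  then obtain x xs ys y where Ds: "Ds = x # xs" "Ds = ys @ [y]"
    by (metis list.exhaust rev_exhaust)
  have sorted: "sorted_wrt precedes Ds"
    unfolding Ds_def using assms(1) by (rule sorted_wrt_filter)
  have "S - hd Ds \<subseteq> \<Union>(set xs)" "\<forall>E\<in>set xs. precedes x E"
    using S sorted Ds(1) by auto
  then show "precedes (hd Ds) (S - hd Ds)"
    using Ds(1) unfolding precedes_def by fastforce
  have "S - last Ds \<subseteq> \<Union>(set ys)" "\<forall>E\<in>set ys. precedes E y"
    using S sorted Ds(2) by (auto simp: sorted_wrt_append)
  then show "precedes (S - last Ds) (last Ds)"
    using Ds(2) unfolding precedes_def by fastforce
qed

lemma splitter_props:
  assumes "sorted_wrt precedes P" "\<And>D. D \<in> set P \<Longrightarrow> block D" "is_candidate P S"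
    and B: "B = (if fstB then hd (filter (\<lambda>D. D \<subseteq> S) P) else last (filter (\<lambda>D. D \<subseteq> S) P))"
  shows "B \<in> set P" "B \<subseteq> S" "S \<subseteq> Q" "saturated B" "saturated (S - B)"
    and "if fstB then precedes B (S - B) else precedes (S - B) B"
proof -
  define Ds where "Ds = filter (\<lambda>D. D \<subseteq> S) P"
  note splitter = splitter_order[OF assms(1,3), folded Ds_def]
  have B_Ds: "B = (if fstB then hd Ds else last Ds)"
    using B unfolding Ds_def by simp
  then have "B \<in> set Ds"
    using splitter(1) by (simp add: hd_in_set last_in_set)
  then show "B \<in> set P" "B \<subseteq> S"
    unfolding Ds_def by auto
  have Ds_blocks: "\<And>E. E \<in> set Ds \<Longrightarrow> block E"
    using assms(2) unfolding Ds_def by simp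
  then show "S \<subseteq> Q"
    using splitter(2) unfolding block_def by blast
  have "saturated (\<Union>(set Ds))"
    by (rule saturated_Union) (use Ds_blocks in \<open>simp add: block_def\<close>)
  then have "saturated S"
    using splitter(2) by simp
  moreover show "saturated B"
    using assms(2)[OF \<open>B \<in> set P\<close>] unfolding block_def by blast
  ultimately show "saturated (S - B)"
    using saturated_Diff by blast
  show "if fstB then precedes B (S - B) else precedes (S - B) B"
    using splitter(3,4) B_Ds by simp
qed

definition refinement_invariant where
  "refinement_invariant P X \<longleftrightarrow>
     (\<forall>D\<in>set P. block D \<and> (D \<noteq> {s} \<longrightarrow> (\<forall>T\<in>set X. stable_wrt D T))) \<and> sorted_wrt precedes P"

lemma refinement_invariant_init:
  "refinement_invariant (fst (opr_init Q Al \<delta> s)) (snd (opr_init Q Al \<delta> s))"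
proof -
  have Al: "set (sorted_list_of_set Al) = Al"
    using nfa_std unfolding nfa_std_def by simp
  then have init: "opr_init Q Al \<delta> s = ({s} # map (\<lambda>a. dimg \<delta> a Q) (sorted_list_of_set Al), [Q])"
    unfolding opr_init_def using dimg_Q by simp
  have "block (dimg \<delta> a Q) \<and> stable_wrt (dimg \<delta> a Q) Q" if "a \<in> Al" for a
    using block_dimg_Q[OF that] unfolding stable_wrt_def by simp
  moreover have "precedes {s} (dimg \<delta> a Q)" if "a \<in> Al" for a
    by (rule precedes_source) (use dimg_Q[OF that] in blast)+
  moreover have "sorted_wrt (\<lambda>a b. precedes (dimg \<delta> a Q) (dimg \<delta> b Q)) (sorted_list_of_set Al)"
  proof (rule sorted_wrt_mono_rel[OF _ strict_sorted_list_of_set])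
    fix a b assume "a \<in> set (sorted_list_of_set Al)" "b \<in> set (sorted_list_of_set Al)" "a < b"
    then show "precedes (dimg \<delta> a Q) (dimg \<delta> b Q)"
      using precedes_dimg_less[OF \<open>a < b\<close> _ _ subset_refl subset_refl] Al by blast
  qed
  ultimately show ?thesis
    unfolding refinement_invariant_def init using Al block_source by (auto simp: sorted_wrt_map)
qed

lemma refinement_invariant_split:
  assumes inv: "refinement_invariant P X" and S: "S \<in> set X" "is_candidate P S"
    and B: "B = (if fstB then hd (filter (\<lambda>D. D \<subseteq> S) P) else last (filter (\<lambda>D. D \<subseteq> S) P))"
    and X2: "set X2 \<subseteq> {B, S - B} \<union> set X"
    and P2: "P2 = concat (map (split_part Q Al \<delta> s B S fstB) P)"
  shows "refinement_invariant P2 X2"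
proof -
  have sorted: "sorted_wrt precedes P" and blocks: "\<And>D. D \<in> set P \<Longrightarrow> block D"
    and stable: "\<And>D T. D \<in> set P \<Longrightarrow> D \<noteq> {s} \<Longrightarrow> T \<in> set X \<Longrightarrow> stable_wrt D T"
    using inv unfolding refinement_invariant_def by blast+
  note splitter = splitter_props[OF sorted blocks S(2) B]
  have pieces: "block D' \<and> D' \<subseteq> D \<and> (D' \<noteq> {s} \<longrightarrow> (\<forall>T\<in>set X2. stable_wrt D' T))"
    if D: "D \<in> set P" and D': "D' \<in> set (split_part Q Al \<delta> s B S fstB D)" for D D'
  proof -
    have new: "block D'" "D' \<subseteq> D" "D' \<noteq> {s} \<Longrightarrow> stable_wrt D' B \<and> stable_wrt D' (S - B)"
      using split_part_blocks[OF blocks[OF D] stable[OF D _ S(1)] splitter(2-5) D']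
      by blast+
    have "stable_wrt D' T" if "D' \<noteq> {s}" "T \<in> set X" for T
    proof -
      have "D \<noteq> {s}"
        using new(1,2) that(1) unfolding block_def by blast
      then show ?thesis
        using stable_wrt_subset[OF blocks[OF D] new(2)] stable[OF D _ that(2)] new(1)
        unfolding block_def by blast
    qed
    then show ?thesis
      using new X2 by blast
  qed
  have "sorted_wrt precedes P2"
    unfolding P2
  proof (rule sorted_wrt_concat_map[OF sorted])
    show "sorted_wrt precedes (split_part Q Al \<delta> s B S fstB D)" if "D \<in> set P" for D
      using split_part_sorted[OF blocks[OF that] stable[OF that _ S(1)] splitter(2-6)] .
    show "precedes D1' D2'"
      if "D1 \<in> set P" "D2 \<in> set P" "precedes D1 D2"
        "D1' \<in> set (split_part Q Al \<delta> s B S fstB D1)" "D2' \<in> set (split_part Q Al \<delta> s B S fstB D2)"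
      for D1 D2 D1' D2'
    proof -
      have "D1' \<subseteq> D1" "D2' \<subseteq> D2"
        using pieces that(1,2,4,5) by blast+
      then show ?thesis
        using that(3) unfolding precedes_def by blast
    qed
  qed
  moreover have "block D' \<and> (D' \<noteq> {s} \<longrightarrow> (\<forall>T\<in>set X2. stable_wrt D' T))" if D': "D' \<in> set P2" for D'
  proof -
    obtain D where "D \<in> set P" "D' \<in> set (split_part Q Al \<delta> s B S fstB D)"
      using D' unfolding P2 by auto
    then show ?thesis
      using pieces by blast
  qed
  ultimately show ?thesis
    unfolding refinement_invariant_def by blast
qed

lemma refinement_invariant_opr_step:
  assumes "refinement_invariant P X" "opr_step Q Al \<delta> s (P, X) st"
  shows "refinement_invariant (fst st) (snd st)"
proof -
  obtain i fstB B where i: "i < length X" "is_candidate P (X ! i)"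
    and B: "B = (if fstB then hd (filter (\<lambda>D. D \<subseteq> X ! i) P) else last (filter (\<lambda>D. D \<subseteq> X ! i) P))"
    and X2: "snd st = take i X @ (if fstB then [B, X ! i - B] else [X ! i - B, B]) @ drop (Suc i) X"
    and P2: "fst st = concat (map (split_part Q Al \<delta> s B (X ! i) fstB) P)"
    using assms(2) unfolding opr_step_def Let_def fst_conv snd_conv by blast
  have "set (snd st) \<subseteq> {B, X ! i - B} \<union> set X"
    unfolding X2 by (auto dest: in_set_takeD in_set_dropD)
  then show ?thesis
    using refinement_invariant_split[OF assms(1) nth_mem[OF i(1)] i(2) B _ P2] by blast
qed

lemma refinement_invariant_reachable:
  assumes "(opr_step Q Al \<delta> s)\<^sup>*\<^sup>* (opr_init Q Al \<delta> s) st"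
  shows "refinement_invariant (fst st) (snd st)"
  using assms
proof (induction rule: rtranclp_induct)
  case base
  then show ?case
    by (rule refinement_invariant_init)
next
  case (step st st')
  then show ?case
    using refinement_invariant_opr_step[of "fst st" "snd st" st'] by simp
qed

end

theorem lemma11:
  fixes Q :: "'q set" and Al :: "'a::linorder set" and \<delta> :: "'q \<Rightarrow> 'a \<Rightarrow> 'q set" and s :: 'q
    and P' :: "'q set set" and P X :: "'q set list" and lt :: "'q set \<Rightarrow> 'q set \<Rightarrow> bool"
  assumes "nfa_std Q Al \<delta> s"
    and "quasi_wheeler Q Al \<delta> s"
    and "coarsest_fs Q Al \<delta> P'"
    and "(opr_step Q Al \<delta> s)\<^sup>*\<^sup>* (opr_init Q Al \<delta> s) (P, X)"
    and "i < j" and "j < length P"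
    and "u \<in> P ! i" and "v \<in> P ! j"
    and "wheeler_order P' Al (quot_delta \<delta> P') (part_of P' s) lt"
  shows "lt (part_of P' u) (part_of P' v)"
proof -
  interpret wheeler_quotient Q Al \<delta> s P' lt
    using assms(1,3,9) by unfold_locales (simp_all add: coarsest_fs_def)
  have "sorted_wrt precedes P"
    using refinement_invariant_reachable[OF assms(4)] unfolding refinement_invariant_def by simp
  then have "precedes (P ! i) (P ! j)"
    using assms(5,6) by (rule sorted_wrt_nth_less)
  then show ?thesis
    using assms(7,8) unfolding precedes_def by blast
qed

end
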